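(* Fix $\kappa>0$ and $x_0\in\mathbb R^2$ with $\kappa|x_0|$ irrational. Let $m,\Phi,I,l,\alpha_0$ satisfy hypotheses (1)–(3) of Lemma (int1 est), and set $u(\alpha):=\Phi_l(\alpha)-\Phi_l(\alpha_0)$ (which does not change sign on $I$). Then the function $$f(\alpha):=\frac{d}{d\alpha}\Bigl[\frac{|u(\alpha)|^{1/2}}{\sin(\pi\kappa\Phi_l'(\alpha))}\Bigr],$$ defined on $I$ away from the zero set of $\Phi_l'$, changes sign at most $N$ times on $I$, where $N$ is independent of $m\neq0$ (and of $l$ and $I$).
   Context: $\vec\alpha=(\cos\alpha,\sin\alpha)$. $\Phi(\alpha):=-m\,\vec\alpha\cdot x_0$ with $m\in\mathbb Z\setminus\{0\}$; $\Phi_l(\alpha):=\Phi(\alpha)-(l/\kappa)\alpha$. Hypotheses of Lemma (int1 est): $I=[a,b]\subset[-\pi,\pi]$, $l\in\mathbb Z$; (1) $\Phi''(\alpha)\neq0$ on $(a,b)$; (2) $\alpha_0\in I$ with $\kappa\Phi'(\alpha_0)=l$ and $\Phi''(\alpha_0)\ne0$; (3) $|\kappa\Phi'(\alpha)-l|\le1/2$ on $I$. *)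

theory Defs
  imports "HOL-Analysis.Analysis"
begin

definition avec :: "real \<Rightarrow> real^2" where
  "avec \<alpha> = vector [cos \<alpha>, sin \<alpha>]"

definition Phi :: "int \<Rightarrow> real^2 \<Rightarrow> real \<Rightarrow> real" where
  "Phi m x0 \<alpha> = - of_int m * (avec \<alpha> \<bullet> x0)"

definition Phi_l :: "real \<Rightarrow> int \<Rightarrow> real^2 \<Rightarrow> int \<Rightarrow> real \<Rightarrow> real" where
  "Phi_l \<kappa> m x0 l \<alpha> = Phi m x0 \<alpha> - (of_int l / \<kappa>) * \<alpha>"

definition sign_changes_at_most :: "nat \<Rightarrow> (real \<Rightarrow> real) \<Rightarrow> real set \<Rightarrow> bool" where
  "sign_changes_at_most N f D \<longleftrightarrow>
     \<not> (\<exists>t :: nat \<Rightarrow> real. (\<forall>i\<le>Suc N. t i \<in> D) \<and>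
            (\<forall>i\<le>N. t i < t (Suc i) \<and> f (t i) * f (t (Suc i)) < 0))"

end

theory Submission
  imports Defs
begin

(*
  Write h = \<kappa> \<Phi>_l' and u = \<Phi>_l - \<Phi>_l(\<alpha>0). Since \<Phi>'' = -\<Phi>, the phase obeys h'' = -(h + l),
  and u' = h / \<kappa>. On either side of \<alpha>0, where h' and u have a fixed sign and 0 < |h| < 1/2,
  the derivative of g = sqrt |u| / sin (\<pi> h) is K H with K > 0 and
  H = h tan (\<pi> h) / (2 \<pi> \<kappa> h') - u. In turn H' is a positive multiple of
  M = 1 / (2 \<pi> h) - cot (2 \<pi> h) + (h + l) / (2 \<pi> h'^2), and M' has the sign of h' because
  |sin y| \<le> |y|. So M is monotone, H is monotone on each of the two intervals where M has a
  fixed sign, and g' changes sign at most once on each of them. Counting how many points of an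
  alternating sequence each interval can hold bounds the number of sign changes on [a, b] by an
  absolute constant.
*)

section \<open>Counting sign changes\<close>

lemma sign_changes_at_most_singleton: "sign_changes_at_most N f {c}"
  unfolding sign_changes_at_most_def
proof clarify
  fix t assume "\<forall>i\<le>Suc N. t i \<in> {c}" "\<forall>i\<le>N. t i < t (Suc i) \<and> f (t i) * f (t (Suc i)) < 0"
  then have "t 0 = c" "t 1 = c" "t 0 < t 1" by auto
  then show False by simp
qed

lemma alternating_points_increasing:
  assumes "\<forall>i\<le>N. t i < t (Suc i)" "i < j" "j \<le> Suc N"
  shows "t i < (t j :: real)"
  using assms(2,3)
proof (induction j)
  case (Suc j)
  with assms(1) show ?case
    by (cases "i = j") (auto intro: less_trans)
qed simp

text \<open>The indices of an alternating sequence that fall into an interval are consecutive,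
  so k + 2 of them would exhibit k + 1 sign changes inside the interval.\<close>
lemma card_alternating_points_in_interval:
  assumes P: "is_interval P" "sign_changes_at_most k f P"
    and alt: "\<forall>i\<le>N. t i < t (Suc i) \<and> f (t i) * f (t (Suc i)) < 0"
  shows "card {i. i \<le> Suc N \<and> t i \<in> P} \<le> Suc k"
proof (rule ccontr)
  define F where "F = {i. i \<le> Suc N \<and> t i \<in> P}"
  assume "\<not> card {i. i \<le> Suc N \<and> t i \<in> P} \<le> Suc k"
  then have card_F: "Suc (Suc k) \<le> card F" unfolding F_def by simp
  have fin: "finite F" unfolding F_def by simp
  then have "F \<noteq> {}" using card_F by auto
  define i0 where "i0 = Min F"
  define i1 where "i1 = Max F"
  have i0: "i0 \<in> F" and i1: "i1 \<in> F"
    using fin \<open>F \<noteq> {}\<close> unfolding i0_def i1_def by auto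
  have "F \<subseteq> {i0..i1}" using fin unfolding i0_def i1_def by auto
  then have "card F \<le> card {i0..i1}" by (intro card_mono) simp_all
  then have "card F \<le> Suc i1 - i0" by simp
  then have long: "i0 + Suc k \<le> i1" using card_F by linarith
  have mono: "t i \<le> t j" if "i \<le> j" "j \<le> Suc N" for i j
    using alternating_points_increasing[of N t i j] alt that by (cases "i = j") auto
  have block: "t (i0 + j) \<in> P" if "j \<le> Suc k" for j
  proof -
    have "t i0 \<in> P" "t i1 \<in> P" "i1 \<le> Suc N" using i0 i1 unfolding F_def by auto
    moreover have "t i0 \<le> t (i0 + j)" "t (i0 + j) \<le> t i1"
      using mono that long \<open>i1 \<le> Suc N\<close> by auto
    ultimately show ?thesis using mem_is_interval_1_I[OF P(1)] by blast
  qed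
  have "i1 \<le> Suc N" using i1 unfolding F_def by simp
  then have "\<forall>j\<le>k. t (i0 + j) < t (i0 + Suc j) \<and> f (t (i0 + j)) * f (t (i0 + Suc j)) < 0"
    using alt long by auto
  with block have "\<exists>s. (\<forall>j\<le>Suc k. s j \<in> P) \<and>
      (\<forall>j\<le>k. s j < s (Suc j) \<and> f (s j) * f (s (Suc j)) < 0)"
    by (intro exI[of _ "\<lambda>j. t (i0 + j)"]) simp
  with P(2) show False unfolding sign_changes_at_most_def by blast
qed

lemma sign_changes_at_most_cover:
  assumes cover: "D \<subseteq> \<Union> (set Ps)"
    and pieces: "\<And>P. P \<in> set Ps \<Longrightarrow> is_interval P \<and> sign_changes_at_most k f P"
  shows "sign_changes_at_most (Suc k * length Ps) f D"
  unfolding sign_changes_at_most_def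
proof
  define N where "N = Suc k * length Ps"
  assume "\<exists>t. (\<forall>i\<le>Suc N. t i \<in> D) \<and>
      (\<forall>i\<le>N. t i < t (Suc i) \<and> f (t i) * f (t (Suc i)) < 0)"
  then obtain t where tD: "\<forall>i\<le>Suc N. t i \<in> D"
    and alt: "\<forall>i\<le>N. t i < t (Suc i) \<and> f (t i) * f (t (Suc i)) < 0" by blast
  have "{..Suc N} \<subseteq> (\<Union>P\<in>set Ps. {i. i \<le> Suc N \<and> t i \<in> P})"
    using tD cover by auto
  then have "Suc (Suc N) \<le> card (\<Union>P\<in>set Ps. {i. i \<le> Suc N \<and> t i \<in> P})"
    using card_mono[of "\<Union>P\<in>set Ps. {i. i \<le> Suc N \<and> t i \<in> P}" "{..Suc N}"] by simp
  also have "\<dots> \<le> (\<Sum>P\<in>set Ps. card {i. i \<le> Suc N \<and> t i \<in> P})"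
    by (rule card_UN_le) simp
  also have "\<dots> \<le> (\<Sum>P\<in>set Ps. Suc k)"
    using pieces by (intro sum_mono card_alternating_points_in_interval[OF _ _ alt]) auto
  also have "\<dots> = Suc k * card (set Ps)" by simp
  also have "\<dots> \<le> N" unfolding N_def by (rule mult_le_mono2[OF card_length])
  finally show False by simp
qed

lemma sign_changes_at_most_1_if_monotone_factor:
  assumes factor: "\<And>x. x \<in> P \<Longrightarrow> f x = K x * H x \<and> 0 < K x"
    and mono: "mono_on P H \<or> antimono_on P H"
  shows "sign_changes_at_most 1 f P"
  unfolding sign_changes_at_most_def
proof
  assume "\<exists>t. (\<forall>i\<le>Suc 1. t i \<in> P) \<and> (\<forall>i\<le>1. t i < t (Suc i) \<and> f (t i) * f (t (Suc i)) < 0)"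
  then obtain t where t: "\<forall>i\<le>Suc 1. t i \<in> P"
    "\<forall>i\<le>1. t i < t (Suc i) \<and> f (t i) * f (t (Suc i)) < 0" by blast
  define x y z where "x = t 0" and "y = t 1" and "z = t 2"
  have xyz: "x \<in> P" "y \<in> P" "z \<in> P" "x < y" "y < z"
    and "f x * f y < 0" "f y * f z < 0"
    using t unfolding x_def y_def z_def by (auto simp: numeral_2_eq_2)
  then have "(K x * K y) * (H x * H y) < 0" "(K y * K z) * (H y * H z) < 0"
    using factor by (simp_all add: algebra_simps)
  moreover have "0 < K x * K y" "0 < K y * K z" using factor xyz by auto
  ultimately have "H x * H y < 0" "H y * H z < 0"
    by (metis mult_less_cancel_left_pos mult_zero_right)+
  moreover have "(H x \<le> H y \<and> H y \<le> H z) \<or> (H z \<le> H y \<and> H y \<le> H x)"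
    using mono xyz by (auto dest: monotone_onD)
  ultimately show False
    by (smt (verit) mult_le_0_iff mult_less_0_iff)
qed

lemma is_interval_sign_parts:
  fixes M :: "real \<Rightarrow> real"
  assumes S: "is_interval S" and mono: "mono_on S M \<or> antimono_on S M"
  shows "is_interval {x\<in>S. 0 \<le> M x}" and "is_interval {x\<in>S. M x \<le> 0}"
proof -
  have between: "x \<in> S \<and> (M p \<le> M x \<and> M x \<le> M q \<or> M q \<le> M x \<and> M x \<le> M p)"
    if "p \<in> S" "q \<in> S" "p \<le> x" "x \<le> q" for p q x
  proof -
    have x: "x \<in> S" using mem_is_interval_1_I[OF S] that by blast
    from mono have "(M p \<le> M x \<and> M x \<le> M q) \<or> (M q \<le> M x \<and> M x \<le> M p)"
    proof
      assume "mono_on S M"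
      then show ?thesis using monotone_onD[of S _ _ M] x that by blast
    next
      assume "antimono_on S M"
      then show ?thesis using monotone_onD[of S _ _ M] x that by blast
    qed
    with x show ?thesis by blast
  qed
  show "is_interval {x\<in>S. 0 \<le> M x}"
    unfolding is_interval_1
  proof (intro ballI allI impI)
    fix p q x assume "p \<in> {x\<in>S. 0 \<le> M x}" "q \<in> {x\<in>S. 0 \<le> M x}" "p \<le> x \<and> x \<le> q"
    then show "x \<in> {x\<in>S. 0 \<le> M x}" using between[of p q x] by auto
  qed
  show "is_interval {x\<in>S. M x \<le> 0}"
    unfolding is_interval_1
  proof (intro ballI allI impI)
    fix p q x assume "p \<in> {x\<in>S. M x \<le> 0}" "q \<in> {x\<in>S. M x \<le> 0}" "p \<le> x \<and> x \<le> q"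
    then show "x \<in> {x\<in>S. M x \<le> 0}" using between[of p q x] by auto
  qed
qed

lemma mono_on_if_deriv_nonneg:
  assumes "is_interval S"
    and "\<And>x. x \<in> S \<Longrightarrow> (f has_real_derivative f' x) (at x)" and "\<And>x. x \<in> S \<Longrightarrow> 0 \<le> f' x"
  shows "mono_on S f"
proof (rule mono_onI)
  fix x y assume xy: "x \<in> S" "y \<in> S" "x \<le> y"
  have "z \<in> S" if "z \<in> {x..y}" for z
    using mem_is_interval_1_I[OF assms(1) xy(1,2)] that by simp
  then show "f x \<le> f y"
    using deriv_nonneg_imp_mono[of x y f f'] assms(2,3) xy(3) by blast
qed

lemma antimono_on_if_deriv_nonpos:
  assumes "is_interval S"
    and "\<And>x. x \<in> S \<Longrightarrow> (f has_real_derivative f' x) (at x)" and "\<And>x. x \<in> S \<Longrightarrow> f' x \<le> 0"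
  shows "antimono_on S f"
proof (rule monotone_onI)
  fix x y assume xy: "x \<in> S" "y \<in> S" "x \<le> y"
  have "z \<in> S" if "z \<in> {x..y}" for z
    using mem_is_interval_1_I[OF assms(1) xy(1,2)] that by simp
  then show "f y \<le> f x"
    using deriv_nonpos_imp_antimono[of x y f f'] assms(2,3) xy(3) by blast
qed

lemma strict_mono_on_if_deriv_pos:
  assumes "\<And>x. x \<in> {a..b} \<Longrightarrow> (f has_real_derivative f' x) (at x)"
    and "\<And>x. x \<in> {a<..<b} \<Longrightarrow> 0 < f' x"
  shows "strict_mono_on {a..b} f"
proof (rule strict_mono_onI)
  fix x y assume xy: "x \<in> {a..b}" "y \<in> {a..b}" "x < y"
  have cont: "continuous_on {x..y} f"
  proof (intro continuous_at_imp_continuous_on ballI)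
    fix z assume "z \<in> {x..y}"
    then show "isCont f z" using assms(1)[of z] xy DERIV_isCont by auto
  qed
  have der: "\<exists>d. (f has_real_derivative d) (at z) \<and> 0 < d" if "x < z" "z < y" for z
    using assms(1)[of z] assms(2)[of z] xy that by auto
  show "f x < f y" by (rule DERIV_pos_imp_increasing_open[OF \<open>x < y\<close> der cont])
qed

lemma continuous_nonzero_sign_cases:
  fixes f :: "real \<Rightarrow> real"
  assumes "connected S" "continuous_on S f" "\<And>x. x \<in> S \<Longrightarrow> f x \<noteq> 0"
  shows "(\<forall>x\<in>S. 0 < f x) \<or> (\<forall>x\<in>S. f x < 0)"
proof (rule ccontr)
  assume "\<not> ?thesis"
  then obtain p q where "p \<in> S" "q \<in> S" "f p < 0" "0 < f q"
    using assms(3) by (meson linorder_neqE_linordered_idom)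
  moreover have "is_interval (f ` S)"
    using assms(1,2) by (simp add: is_interval_connected_1 connected_continuous_image)
  ultimately have "0 \<in> f ` S"
    using mem_is_interval_1_I[where S="f ` S" and a="f p" and b=0 and c="f q"] by force
  then show False using assms(3) by force
qed

lemma sign_changes_at_most_4_if_factor_deriv_monotone:
  assumes S: "is_interval S"
    and factor: "\<And>x. x \<in> S \<Longrightarrow> f x = K x * H x \<and> 0 < K x"
    and H_deriv: "\<And>x. x \<in> S \<Longrightarrow> (H has_real_derivative c x * M x) (at x) \<and> 0 < c x"
    and M_deriv: "\<And>x. x \<in> S \<Longrightarrow> (M has_real_derivative M' x) (at x)"
    and M'_sign: "(\<forall>x\<in>S. 0 \<le> M' x) \<or> (\<forall>x\<in>S. M' x \<le> 0)"
  shows "sign_changes_at_most 4 f S"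
proof -
  define S_nonneg where "S_nonneg = {x\<in>S. 0 \<le> M x}"
  define S_nonpos where "S_nonpos = {x\<in>S. M x \<le> 0}"
  have "mono_on S M \<or> antimono_on S M"
    using M'_sign mono_on_if_deriv_nonneg[OF S M_deriv] antimono_on_if_deriv_nonpos[OF S M_deriv]
    by blast
  then have intervals: "is_interval S_nonneg" "is_interval S_nonpos"
    unfolding S_nonneg_def S_nonpos_def using is_interval_sign_parts[OF S] by auto
  have "mono_on S_nonneg H"
    by (rule mono_on_if_deriv_nonneg[OF intervals(1)])
      (use H_deriv in \<open>auto simp: S_nonneg_def intro: mult_nonneg_nonneg less_imp_le\<close>)
  then have nonneg: "sign_changes_at_most 1 f S_nonneg"
    using factor unfolding S_nonneg_def by (intro sign_changes_at_most_1_if_monotone_factor) blast+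
  have "antimono_on S_nonpos H"
    by (rule antimono_on_if_deriv_nonpos[OF intervals(2)])
      (use H_deriv in \<open>auto simp: S_nonpos_def intro: mult_nonneg_nonpos less_imp_le\<close>)
  then have nonpos: "sign_changes_at_most 1 f S_nonpos"
    using factor unfolding S_nonpos_def by (intro sign_changes_at_most_1_if_monotone_factor) blast+
  have "S \<subseteq> \<Union> (set [S_nonneg, S_nonpos])" unfolding S_nonneg_def S_nonpos_def by auto
  then have "sign_changes_at_most (Suc 1 * length [S_nonneg, S_nonpos]) f S"
    by (rule sign_changes_at_most_cover) (use intervals nonneg nonpos in auto)
  then show ?thesis by (simp add: eval_nat_numeral)
qed

section \<open>The phase equation\<close>

lemma has_real_derivative_abs:
  assumes "(f has_real_derivative D) (at x)" "f x \<noteq> 0"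
  shows "((\<lambda>x. \<bar>f x\<bar>) has_real_derivative sgn (f x) * D) (at x)"
proof -
  have "((\<lambda>x. sqrt ((f x)\<^sup>2)) has_real_derivative inverse (sqrt ((f x)\<^sup>2)) / 2 * (2 * f x * D)) (at x)"
    using assms by (intro DERIV_chain2[OF DERIV_real_sqrt]) (auto intro!: derivative_eq_intros)
  moreover have "inverse (sqrt ((f x)\<^sup>2)) / 2 * (2 * f x * D) = sgn (f x) * D"
    using assms(2) by (simp add: sgn_real_def divide_simps)
  moreover have "(\<lambda>x. sqrt ((f x)\<^sup>2)) = (\<lambda>x. \<bar>f x\<bar>)" by simp
  ultimately show ?thesis by metis
qed

lemma mult_sin_pi_pos:
  assumes "0 < \<bar>t\<bar>" "\<bar>t\<bar> < 1"
  shows "0 < t * sin (pi * t)"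
proof (cases "0 < t")
  case True
  then have "0 < sin (pi * t)" using assms by (intro sin_gt_zero) auto
  with True show ?thesis by simp
next
  case False
  then have "pi * - t < pi * 1" using assms by (intro mult_strict_left_mono) auto
  then have "0 < sin (pi * - t)" using False assms by (intro sin_gt_zero) (auto simp: mult_pos_neg)
  with False assms(1) show ?thesis by (simp add: mult_neg_neg)
qed

lemma trig_signs_if_abs_less_half:
  fixes t :: real
  assumes "0 < \<bar>t\<bar>" "\<bar>t\<bar> < 1/2"
  shows "0 < cos (pi * t)" and "0 < t * sin (2 * pi * t)" and "sin (pi * t) \<noteq> 0"
proof -
  have "\<bar>pi * t\<bar> < pi / 2" using assms(2) by (simp add: abs_mult)
  then show cos: "0 < cos (pi * t)" by (intro cos_gt_zero_pi) arith+
  have "0 < (2 * t) * sin (pi * (2 * t))" using assms by (intro mult_sin_pi_pos) auto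
  then show sin2: "0 < t * sin (2 * pi * t)" by (simp add: zero_less_mult_iff mult_ac)
  show "sin (pi * t) \<noteq> 0" using sin2 sin_double[of "pi * t"] by (auto simp: mult_ac)
qed

lemma inverse_square_le_inverse_sin_square:
  fixes y :: real
  assumes "sin y \<noteq> 0"
  shows "1 / y\<^sup>2 \<le> 1 / (sin y)\<^sup>2"
proof (rule divide_left_mono)
  show "(sin y)\<^sup>2 \<le> y\<^sup>2" using abs_sin_x_le_abs_x[of y] by (simp add: abs_le_square_iff)
  show "0 < y\<^sup>2 * (sin y)\<^sup>2"
    using assms by (auto simp: zero_less_mult_iff)
qed simp

text \<open>In the application h = \<kappa> \<Phi>_l', h' = \<kappa> \<Phi>'' and u = \<Phi>_l - \<Phi>_l(\<alpha>0).\<close>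

locale phase_ode =
  fixes \<kappa> l :: real and h h' u :: "real \<Rightarrow> real"
  assumes kappa_pos: "0 < \<kappa>"
    and has_real_derivative_h: "\<And>x. (h has_real_derivative h' x) (at x)"
    and has_real_derivative_h': "\<And>x. (h' has_real_derivative - (h x + l)) (at x)"
    and has_real_derivative_u: "\<And>x. (u has_real_derivative h x / \<kappa>) (at x)"
begin

definition g :: "real \<Rightarrow> real" where
  "g x = sqrt \<bar>u x\<bar> / sin (pi * h x)"

definition H :: "real \<Rightarrow> real" where
  "H x = h x * tan (pi * h x) / (2 * pi * \<kappa> * h' x) - u x"

definition M :: "real \<Rightarrow> real" where
  "M x = 1 / (2 * pi * h x) - cot (2 * pi * h x) + (h x + l) / (2 * pi * (h' x)\<^sup>2)"

lemma deriv_g_eq: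
  assumes "u x \<noteq> 0" "h' x \<noteq> 0" "sin (pi * h x) \<noteq> 0" "cos (pi * h x) \<noteq> 0"
  shows "deriv g x = sgn (u x) * h' x * pi * cos (pi * h x) / (sqrt \<bar>u x\<bar> * (sin (pi * h x))\<^sup>2) * H x"
proof -
  define r where "r = sqrt \<bar>u x\<bar>"
  have r: "0 < r" "\<bar>u x\<bar> = r\<^sup>2" "sgn (u x) * u x = r\<^sup>2"
    using assms(1) unfolding r_def by (auto simp: abs_if sgn_real_def)
  have "((\<lambda>x. sqrt \<bar>u x\<bar>) has_real_derivative inverse r / 2 * (sgn (u x) * (h x / \<kappa>))) (at x)"
    unfolding r_def using assms(1)
    by (intro DERIV_chain2[OF DERIV_real_sqrt] has_real_derivative_abs has_real_derivative_u) simp_all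
  moreover have "((\<lambda>x. sin (pi * h x)) has_real_derivative cos (pi * h x) * (pi * h' x)) (at x)"
    by (intro DERIV_chain2[OF DERIV_sin] DERIV_cmult has_real_derivative_h)
  ultimately have "(g has_real_derivative
      (inverse r / 2 * (sgn (u x) * (h x / \<kappa>)) * sin (pi * h x) - r * (cos (pi * h x) * (pi * h' x)))
        / (sin (pi * h x) * sin (pi * h x))) (at x)"
    unfolding g_def[abs_def] r_def using assms(3) by (rule DERIV_divide)
  then have "deriv g x = (inverse r / 2 * (sgn (u x) * (h x / \<kappa>)) * sin (pi * h x)
      - r * (cos (pi * h x) * (pi * h' x))) / (sin (pi * h x) * sin (pi * h x))"
    by (rule DERIV_imp_deriv)
  also have "\<dots> = sgn (u x) * h' x * pi * cos (pi * h x) / (r * (sin (pi * h x))\<^sup>2) * H x"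
    using assms kappa_pos r unfolding H_def tan_def
    by (simp add: field_simps power2_eq_square)
  finally show ?thesis unfolding r_def .
qed

lemma has_real_derivative_H:
  assumes "h x \<noteq> 0" "h' x \<noteq> 0" "cos (pi * h x) \<noteq> 0" "sin (2 * pi * h x) \<noteq> 0"
  shows "(H has_real_derivative h x * sin (2 * pi * h x) / (2 * \<kappa> * (cos (pi * h x))\<^sup>2) * M x) (at x)"
proof -
  define c s where "c = cos (pi * h x)" and "s = sin (pi * h x)"
  have tan: "((\<lambda>x. tan (pi * h x)) has_real_derivative inverse (c\<^sup>2) * (pi * h' x)) (at x)"
    unfolding c_def using assms(3)
    by (intro DERIV_chain2[OF DERIV_tan] DERIV_cmult has_real_derivative_h)
  have "((\<lambda>x. h x * tan (pi * h x) / (2 * pi * \<kappa> * h' x)) has_real_derivative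
      ((h' x * tan (pi * h x) + inverse (c\<^sup>2) * (pi * h' x) * h x) * (2 * pi * \<kappa> * h' x)
        - h x * tan (pi * h x) * (2 * pi * \<kappa> * - (h x + l)))
      / (2 * pi * \<kappa> * h' x * (2 * pi * \<kappa> * h' x))) (at x)"
    using assms(2) kappa_pos
    by (intro DERIV_divide DERIV_mult tan has_real_derivative_h DERIV_cmult has_real_derivative_h') simp
  then have H_deriv: "(H has_real_derivative
      ((h' x * tan (pi * h x) + inverse (c\<^sup>2) * (pi * h' x) * h x) * (2 * pi * \<kappa> * h' x)
        - h x * tan (pi * h x) * (2 * pi * \<kappa> * - (h x + l)))
      / (2 * pi * \<kappa> * h' x * (2 * pi * \<kappa> * h' x)) - h x / \<kappa>) (at x)"
    unfolding H_def[abs_def] by (intro DERIV_diff has_real_derivative_u)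
  have sin2: "sin (2 * pi * h x) = 2 * s * c"
    unfolding s_def c_def using sin_double[of "pi * h x"] by (simp add: mult.assoc)
  have "cos (2 * pi * h x) = 2 * c\<^sup>2 - 1"
    unfolding c_def using cos_double_cos[of "pi * h x"] by (simp add: mult.assoc)
  then have M_eq: "M x = 1 / (2 * pi * h x) - (2 * c\<^sup>2 - 1) / (2 * s * c) + (h x + l) / (2 * pi * (h' x)\<^sup>2)"
    unfolding M_def cot_def sin2 by simp
  have "s \<noteq> 0" "c \<noteq> 0" using assms(3,4) sin2 c_def by auto
  show ?thesis
    unfolding sin2 M_eq c_def[symmetric]
    using H_deriv[unfolded tan_def c_def[symmetric] s_def[symmetric]]
    by (rule DERIV_cong)
      (use \<open>s \<noteq> 0\<close> \<open>c \<noteq> 0\<close> assms(1,2) kappa_pos in \<open>simp add: field_simps power2_eq_square\<close>)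
qed

lemma has_real_derivative_M:
  assumes "h x \<noteq> 0" "h' x \<noteq> 0" "sin (2 * pi * h x) \<noteq> 0"
  shows "(M has_real_derivative h' x * (2 * pi * (1 / (sin (2 * pi * h x))\<^sup>2 - 1 / (2 * pi * h x)\<^sup>2)
      + ((h' x)\<^sup>2 + 2 * (h x + l)\<^sup>2) / (2 * pi * (h' x) ^ 4))) (at x)"
proof -
  have "((\<lambda>x. 1 / (2 * pi * h x)) has_real_derivative - (2 * pi * h' x) / (2 * pi * h x)\<^sup>2) (at x)"
    using assms(1) by (auto intro!: derivative_eq_intros has_real_derivative_h simp: power2_eq_square)
  moreover have "((\<lambda>x. cot (2 * pi * h x)) has_real_derivative
      - inverse ((sin (2 * pi * h x))\<^sup>2) * (2 * pi * h' x)) (at x)"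
    using assms(3) by (intro DERIV_chain2[OF DERIV_cot] DERIV_cmult has_real_derivative_h)
  moreover have "((\<lambda>x. (h x + l) / (2 * pi * (h' x)\<^sup>2)) has_real_derivative
      (h' x * (2 * pi * (h' x)\<^sup>2) + (h x + l) * (4 * pi * h' x * (h x + l))) / (2 * pi * (h' x)\<^sup>2)\<^sup>2) (at x)"
    using assms(2)
    by (auto intro!: derivative_eq_intros has_real_derivative_h has_real_derivative_h' simp: power2_eq_square algebra_simps)
  ultimately have "(M has_real_derivative - (2 * pi * h' x) / (2 * pi * h x)\<^sup>2
      - - inverse ((sin (2 * pi * h x))\<^sup>2) * (2 * pi * h' x)
      + (h' x * (2 * pi * (h' x)\<^sup>2) + (h x + l) * (4 * pi * h' x * (h x + l))) / (2 * pi * (h' x)\<^sup>2)\<^sup>2) (at x)"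
    unfolding M_def[abs_def] by (intro DERIV_add DERIV_diff)
  then show ?thesis
    by (rule DERIV_cong) (use assms in \<open>simp add: field_simps power2_eq_square power4_eq_xxxx\<close>)
qed

lemma sign_changes_deriv_g_on_side:
  assumes S: "is_interval S" and \<epsilon>: "\<epsilon> = 1 \<or> \<epsilon> = -1"
    and small: "\<And>x. x \<in> S \<Longrightarrow> 0 < \<bar>h x\<bar> \<and> \<bar>h x\<bar> < 1/2"
    and signs: "\<And>x. x \<in> S \<Longrightarrow> 0 < \<epsilon> * h' x \<and> 0 < \<epsilon> * u x"
  shows "sign_changes_at_most 4 (deriv g) S"
proof -
  define K where "K x = sgn (u x) * h' x * pi * cos (pi * h x) / (sqrt \<bar>u x\<bar> * (sin (pi * h x))\<^sup>2)" for x
  define c where "c x = h x * sin (2 * pi * h x) / (2 * \<kappa> * (cos (pi * h x))\<^sup>2)" for x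
  define B where "B x = 2 * pi * (1 / (sin (2 * pi * h x))\<^sup>2 - 1 / (2 * pi * h x)\<^sup>2)
      + ((h' x)\<^sup>2 + 2 * (h x + l)\<^sup>2) / (2 * pi * (h' x) ^ 4)" for x
  have trig: "0 < cos (pi * h x)" "0 < h x * sin (2 * pi * h x)" "sin (pi * h x) \<noteq> 0"
    if "x \<in> S" for x
    using trig_signs_if_abs_less_half small[OF that] by auto
  have nonzero: "h x \<noteq> 0" "h' x \<noteq> 0" "u x \<noteq> 0" "sin (2 * pi * h x) \<noteq> 0" if "x \<in> S" for x
    using small[OF that] signs[OF that] trig(2)[OF that] by auto
  show ?thesis
  proof (rule sign_changes_at_most_4_if_factor_deriv_monotone[OF S, where K = K and H = H
        and c = c and M = M and M' = "\<lambda>x. h' x * B x"])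
    fix x assume x: "x \<in> S"
    have "sgn (u x) = \<epsilon>" using signs[OF x] \<epsilon> by (auto simp: zero_less_mult_iff)
    then have "0 < sgn (u x) * h' x * pi * cos (pi * h x)"
      using signs[OF x] trig[OF x] by simp
    then show "deriv g x = K x * H x \<and> 0 < K x"
      unfolding K_def using nonzero[OF x] trig[OF x] by (intro conjI deriv_g_eq divide_pos_pos) auto
    show "(H has_real_derivative c x * M x) (at x) \<and> 0 < c x"
      unfolding c_def using nonzero[OF x] trig[OF x] kappa_pos
      by (intro conjI has_real_derivative_H divide_pos_pos) auto
    show "(M has_real_derivative h' x * B x) (at x)"
      unfolding B_def using nonzero[OF x] by (intro has_real_derivative_M)
  next
    have "0 < B x" if "x \<in> S" for x
    proof -
      have "1 / (2 * pi * h x)\<^sup>2 \<le> 1 / (sin (2 * pi * h x))\<^sup>2"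
        using nonzero[OF that] by (intro inverse_square_le_inverse_sin_square)
      moreover have "0 < ((h' x)\<^sup>2 + 2 * (h x + l)\<^sup>2) / (2 * pi * (h' x) ^ 4)"
        using nonzero[OF that] by (intro divide_pos_pos add_pos_nonneg) auto
      ultimately show ?thesis unfolding B_def by (intro add_nonneg_pos mult_nonneg_nonneg) auto
    qed
    then show "(\<forall>x\<in>S. 0 \<le> h' x * B x) \<or> (\<forall>x\<in>S. h' x * B x \<le> 0)"
      using \<epsilon> signs by (force intro: mult_nonneg_nonneg mult_nonpos_nonneg less_imp_le)
  qed
qed

lemma phase_signs:
  assumes \<alpha>0: "\<alpha>0 \<in> {a..b}" "h \<alpha>0 = 0" "u \<alpha>0 = 0"
    and h'_nonzero: "\<And>x. x \<in> {a<..<b} \<Longrightarrow> h' x \<noteq> 0"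
    and h_bound: "\<And>x. x \<in> {a..b} \<Longrightarrow> \<bar>h x\<bar> \<le> 1/2"
  obtains \<epsilon> where "\<epsilon> = 1 \<or> \<epsilon> = -1"
    and "\<And>x. x \<in> {a<..<b} \<Longrightarrow> x \<noteq> \<alpha>0 \<Longrightarrow>
      0 < \<bar>h x\<bar> \<and> \<bar>h x\<bar> < 1/2 \<and> 0 < \<epsilon> * h' x \<and> 0 < \<epsilon> * u x"
proof -
  have "continuous_on {a<..<b} h'"
    by (intro continuous_at_imp_continuous_on ballI DERIV_isCont[OF has_real_derivative_h'])
  then have "(\<forall>x\<in>{a<..<b}. 0 < h' x) \<or> (\<forall>x\<in>{a<..<b}. h' x < 0)"
    by (intro continuous_nonzero_sign_cases h'_nonzero) auto
  then obtain \<epsilon> :: real where \<epsilon>: "\<epsilon> = 1 \<or> \<epsilon> = -1" and \<epsilon>_h': "\<And>x. x \<in> {a<..<b} \<Longrightarrow> 0 < \<epsilon> * h' x"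
    by (metis mult_1 mult_minus1 neg_0_less_iff_less)
  have h_mono: "strict_mono_on {a..b} (\<lambda>x. \<epsilon> * h x)"
    using \<epsilon>_h' by (intro strict_mono_on_if_deriv_pos[where f' = "\<lambda>x. \<epsilon> * h' x"] DERIV_cmult has_real_derivative_h)
  have \<epsilon>_h: "0 < \<epsilon> * h x" if "x \<in> {\<alpha>0<..b}" for x
    using strict_mono_onD[OF h_mono, of \<alpha>0 x] \<alpha>0 that by auto
  have \<epsilon>_h_neg: "\<epsilon> * h x < 0" if "x \<in> {a..<\<alpha>0}" for x
    using strict_mono_onD[OF h_mono, of x \<alpha>0] \<alpha>0 that by auto
  have h_small: "0 < \<bar>h x\<bar> \<and> \<bar>h x\<bar> < 1/2" if x: "x \<in> {a<..<b}" "x \<noteq> \<alpha>0" for x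
  proof -
    have abs_\<epsilon>: "\<bar>\<epsilon>\<bar> = 1" using \<epsilon> by auto
    have "\<epsilon> * h a < \<epsilon> * h x" "\<epsilon> * h x < \<epsilon> * h b"
      using x by (auto intro: strict_mono_onD[OF h_mono])
    moreover have "\<bar>\<epsilon> * h a\<bar> \<le> 1/2" "\<bar>\<epsilon> * h b\<bar> \<le> 1/2"
      using h_bound[of a] h_bound[of b] x abs_\<epsilon> by (simp_all add: abs_mult)
    moreover have "\<epsilon> * h x \<noteq> 0"
      using \<epsilon>_h[of x] \<epsilon>_h_neg[of x] x by (cases "x < \<alpha>0") auto
    ultimately have "0 < \<bar>\<epsilon> * h x\<bar> \<and> \<bar>\<epsilon> * h x\<bar> < 1/2" by arith
    then show ?thesis using abs_\<epsilon> by (simp add: abs_mult)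
  qed
  have \<epsilon>_u: "0 < \<epsilon> * u x" if "x \<in> {a..b}" "x \<noteq> \<alpha>0" for x
  proof (cases "\<alpha>0 < x")
    case True
    have "strict_mono_on {\<alpha>0..b} (\<lambda>x. \<epsilon> * u x)"
      using \<epsilon>_h kappa_pos
      by (intro strict_mono_on_if_deriv_pos[where f' = "\<lambda>x. \<epsilon> * (h x / \<kappa>)"] DERIV_cmult has_real_derivative_u)
        auto
    then show ?thesis using strict_mono_onD[of _ "\<lambda>x. \<epsilon> * u x" \<alpha>0 x] \<alpha>0 that True by auto
  next
    case False
    have "strict_mono_on {a..\<alpha>0} (\<lambda>x. - (\<epsilon> * u x))"
      using \<epsilon>_h_neg kappa_pos
      by (intro strict_mono_on_if_deriv_pos[where f' = "\<lambda>x. - (\<epsilon> * (h x / \<kappa>))"]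
          DERIV_minus DERIV_cmult has_real_derivative_u)
        (auto simp: divide_neg_pos)
    then show ?thesis using strict_mono_onD[of _ "\<lambda>x. - (\<epsilon> * u x)" x \<alpha>0] \<alpha>0 that False by auto
  qed
  show ?thesis using that[OF \<epsilon>] h_small \<epsilon>_h' \<epsilon>_u by auto
qed

lemma sign_changes_deriv_g:
  assumes \<alpha>0: "\<alpha>0 \<in> {a..b}" "h \<alpha>0 = 0" "u \<alpha>0 = 0"
    and "\<And>x. x \<in> {a<..<b} \<Longrightarrow> h' x \<noteq> 0"
    and "\<And>x. x \<in> {a..b} \<Longrightarrow> \<bar>h x\<bar> \<le> 1/2"
  shows "sign_changes_at_most 20 (deriv g) {x \<in> {a..b}. h x \<noteq> 0}"
proof -
  obtain \<epsilon> where \<epsilon>: "\<epsilon> = 1 \<or> \<epsilon> = -1" and signs: "\<And>x. x \<in> {a<..<b} \<Longrightarrow> x \<noteq> \<alpha>0 \<Longrightarrow>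
      0 < \<bar>h x\<bar> \<and> \<bar>h x\<bar> < 1/2 \<and> 0 < \<epsilon> * h' x \<and> 0 < \<epsilon> * u x"
    using phase_signs[OF assms] by blast
  have pieces: "is_interval P \<and> sign_changes_at_most 4 (deriv g) P"
    if "P \<in> set [{a}, {b}, {a<..<\<alpha>0}, {\<alpha>0<..<b}]" for P
  proof -
    have singleton: "is_interval {c} \<and> sign_changes_at_most 4 (deriv g) {c}" for c :: real
      using is_interval_cc[of c c] sign_changes_at_most_singleton by simp
    have "sign_changes_at_most 4 (deriv g) S" if "S = {a<..<\<alpha>0} \<or> S = {\<alpha>0<..<b}" for S
      using that \<alpha>0 signs by (intro sign_changes_deriv_g_on_side[OF _ \<epsilon>]) auto
    with that singleton show ?thesis by auto
  qed
  have "{x \<in> {a..b}. h x \<noteq> 0} \<subseteq> \<Union> (set [{a}, {b}, {a<..<\<alpha>0}, {\<alpha>0<..<b}])"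
  proof
    fix x assume x: "x \<in> {x \<in> {a..b}. h x \<noteq> 0}"
    then have "x \<noteq> \<alpha>0" using \<alpha>0 by auto
    with x show "x \<in> \<Union> (set [{a}, {b}, {a<..<\<alpha>0}, {\<alpha>0<..<b}])" by auto
  qed
  then have "sign_changes_at_most (Suc 4 * length [{a}, {b}, {a<..<\<alpha>0}, {\<alpha>0<..<b}]) (deriv g)
      {x \<in> {a..b}. h x \<noteq> 0}"
    using pieces by (rule sign_changes_at_most_cover)
  then show ?thesis by simp
qed

end

section \<open>The phase function\<close>

lemma Phi_eq: "Phi m x0 \<alpha> = - of_int m * (x0$1 * cos \<alpha> + x0$2 * sin \<alpha>)"
  by (simp add: Phi_def avec_def inner_vec_def sum_2 mult_ac)

lemma has_real_derivative_Phi: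
  "(Phi m x0 has_real_derivative - of_int m * (x0$2 * cos \<alpha> - x0$1 * sin \<alpha>)) (at \<alpha>)"
  unfolding Phi_eq[abs_def] by (auto intro!: derivative_eq_intros simp: algebra_simps)

lemma deriv_Phi: "deriv (Phi m x0) \<alpha> = - of_int m * (x0$2 * cos \<alpha> - x0$1 * sin \<alpha>)"
  by (rule DERIV_imp_deriv[OF has_real_derivative_Phi])

lemma has_real_derivative_deriv_Phi: "(deriv (Phi m x0) has_real_derivative - Phi m x0 \<alpha>) (at \<alpha>)"
  unfolding deriv_Phi[abs_def] Phi_eq by (auto intro!: derivative_eq_intros simp: algebra_simps)

lemma deriv2_Phi: "deriv (deriv (Phi m x0)) \<alpha> = - Phi m x0 \<alpha>"
  by (rule DERIV_imp_deriv[OF has_real_derivative_deriv_Phi])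

lemma has_real_derivative_Phi_l:
  "(Phi_l \<kappa> m x0 l has_real_derivative deriv (Phi m x0) \<alpha> - of_int l / \<kappa>) (at \<alpha>)"
  unfolding Phi_l_def[abs_def] deriv_Phi
  using DERIV_diff[OF has_real_derivative_Phi DERIV_cmult_Id[of "of_int l / \<kappa>"]] by simp

lemma deriv_Phi_l: "deriv (Phi_l \<kappa> m x0 l) \<alpha> = deriv (Phi m x0) \<alpha> - of_int l / \<kappa>"
  by (rule DERIV_imp_deriv[OF has_real_derivative_Phi_l])

lemma phase_ode_Phi:
  assumes "0 < \<kappa>"
  shows "phase_ode \<kappa> (of_int l) (\<lambda>\<alpha>. \<kappa> * deriv (Phi_l \<kappa> m x0 l) \<alpha>)
    (\<lambda>\<alpha>. \<kappa> * deriv (deriv (Phi m x0)) \<alpha>) (\<lambda>\<alpha>. Phi_l \<kappa> m x0 l \<alpha> - Phi_l \<kappa> m x0 l \<alpha>0)"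
proof
  fix x
  show "((\<lambda>\<alpha>. \<kappa> * deriv (Phi_l \<kappa> m x0 l) \<alpha>) has_real_derivative \<kappa> * deriv (deriv (Phi m x0)) x) (at x)"
    unfolding deriv_Phi_l deriv2_Phi
    by (auto intro!: derivative_eq_intros has_real_derivative_deriv_Phi)
  show "((\<lambda>\<alpha>. \<kappa> * deriv (deriv (Phi m x0)) \<alpha>) has_real_derivative
      - (\<kappa> * deriv (Phi_l \<kappa> m x0 l) x + of_int l)) (at x)"
    unfolding deriv_Phi_l deriv2_Phi using assms
    by (auto intro!: derivative_eq_intros has_real_derivative_Phi simp: deriv_Phi field_simps)
  show "((\<lambda>\<alpha>. Phi_l \<kappa> m x0 l \<alpha> - Phi_l \<kappa> m x0 l \<alpha>0) has_real_derivative
      \<kappa> * deriv (Phi_l \<kappa> m x0 l) x / \<kappa>) (at x)"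
    using DERIV_diff[OF has_real_derivative_Phi_l DERIV_const] assms by (simp add: deriv_Phi_l)
qed (fact assms)

theorem mainTheorem11:
  fixes \<kappa> :: real and x0 :: "real^2"
  assumes "\<kappa> > 0" and "\<kappa> * norm x0 \<notin> \<rat>"
  shows "\<exists>N::nat. \<forall>(m::int) (l::int) (a::real) (b::real) (\<alpha>0::real).
    (m \<noteq> 0 \<and> -pi \<le> a \<and> a \<le> b \<and> b \<le> pi
     \<and> (\<forall>\<alpha>\<in>{a<..<b}. deriv (deriv (Phi m x0)) \<alpha> \<noteq> 0)
     \<and> \<alpha>0 \<in> {a..b} \<and> \<kappa> * deriv (Phi m x0) \<alpha>0 = of_int l
     \<and> deriv (deriv (Phi m x0)) \<alpha>0 \<noteq> 0
     \<and> (\<forall>\<alpha>\<in>{a..b}. \<bar>\<kappa> * deriv (Phi m x0) \<alpha> - of_int l\<bar> \<le> 1/2))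
    \<longrightarrow> sign_changes_at_most N
          (deriv (\<lambda>\<alpha>. sqrt \<bar>Phi_l \<kappa> m x0 l \<alpha> - Phi_l \<kappa> m x0 l \<alpha>0\<bar>
                        / sin (pi * \<kappa> * deriv (Phi_l \<kappa> m x0 l) \<alpha>)))
          {\<alpha> \<in> {a..b}. deriv (Phi_l \<kappa> m x0 l) \<alpha> \<noteq> 0}"
proof (intro exI[of _ 20] allI impI; elim conjE)
  fix m l :: int and a b \<alpha>0 :: real
  assume "m \<noteq> 0" "-pi \<le> a" "a \<le> b" "b \<le> pi"
    and h'_nonzero: "\<forall>\<alpha>\<in>{a<..<b}. deriv (deriv (Phi m x0)) \<alpha> \<noteq> 0"
    and \<alpha>0: "\<alpha>0 \<in> {a..b}" and critical: "\<kappa> * deriv (Phi m x0) \<alpha>0 = of_int l"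
    and "deriv (deriv (Phi m x0)) \<alpha>0 \<noteq> 0"
    and bound: "\<forall>\<alpha>\<in>{a..b}. \<bar>\<kappa> * deriv (Phi m x0) \<alpha> - of_int l\<bar> \<le> 1/2"
  interpret phase_ode \<kappa> "of_int l" "\<lambda>\<alpha>. \<kappa> * deriv (Phi_l \<kappa> m x0 l) \<alpha>"
      "\<lambda>\<alpha>. \<kappa> * deriv (deriv (Phi m x0)) \<alpha>" "\<lambda>\<alpha>. Phi_l \<kappa> m x0 l \<alpha> - Phi_l \<kappa> m x0 l \<alpha>0"
    using assms(1) by (rule phase_ode_Phi)
  have h_eq: "\<kappa> * deriv (Phi_l \<kappa> m x0 l) \<alpha> = \<kappa> * deriv (Phi m x0) \<alpha> - of_int l" for \<alpha>
    using assms(1) by (simp add: deriv_Phi_l field_simps)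
  have "sign_changes_at_most 20 (deriv g) {\<alpha> \<in> {a..b}. \<kappa> * deriv (Phi_l \<kappa> m x0 l) \<alpha> \<noteq> 0}"
    using \<alpha>0 critical h'_nonzero bound assms(1) by (intro sign_changes_deriv_g) (auto simp: h_eq)
  moreover have "(\<lambda>\<alpha>. sqrt \<bar>Phi_l \<kappa> m x0 l \<alpha> - Phi_l \<kappa> m x0 l \<alpha>0\<bar>
      / sin (pi * \<kappa> * deriv (Phi_l \<kappa> m x0 l) \<alpha>)) = g"
    by (simp add: g_def[abs_def] mult.assoc)
  ultimately show "sign_changes_at_most 20
      (deriv (\<lambda>\<alpha>. sqrt \<bar>Phi_l \<kappa> m x0 l \<alpha> - Phi_l \<kappa> m x0 l \<alpha>0\<bar>
        / sin (pi * \<kappa> * deriv (Phi_l \<kappa> m x0 l) \<alpha>)))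
      {\<alpha> \<in> {a..b}. deriv (Phi_l \<kappa> m x0 l) \<alpha> \<noteq> 0}"
    using assms(1) by simp
qed

end
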